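(* For the Lr $(\mathbf a,\tau)$ interval exchange transformation $T$ and its dual $\tilde T$, one has $D\cap T^k(D)=\emptyset$ for all $k\in\mathbb N$ if and only if $D\cap\tilde T^k(D)=\emptyset$ for all $k\in\mathbb N$.
   Context: Fix $n\ge 2$, $[n]=\{1,\dots,n\}$, a vector $\mathbf a=(a_1,\dots,a_n)$ with all $a_i>0$ and $\sum_i a_i=1$, and a permutation $\tau$ of $[n]$. Put $b_0=0$, $b_i=\sum_{j=1}^i a_j$, $J_i=[b_{i-1},b_i)$, $\tilde J_i=(b_{i-1},b_i]$, $D=\{b_1,\dots,b_{n-1}\}$, $b^\tau_0=0$, $b^\tau_i=\sum_{j=1}^i a_{\tau^{-1}(j)}$. $T:[0,1)\to[0,1)$ and $\tilde T:(0,1]\to(0,1]$ are defined by $x\mapsto x-b_{i-1}+b^\tau_{\tau(i)-1}$ for $x\in J_i$ (resp. $x\in\tilde J_i$). *)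

theory Defs
  imports Complex_Main "HOL-Combinatorics.Permutations"
begin

definition bpt :: "(nat \<Rightarrow> real) \<Rightarrow> nat \<Rightarrow> real" where
  "bpt a i = (\<Sum>j=1..i. a j)"

definition btau :: "(nat \<Rightarrow> real) \<Rightarrow> (nat \<Rightarrow> nat) \<Rightarrow> nat \<Rightarrow> real" where
  "btau a \<tau> i = (\<Sum>j=1..i. a (inv \<tau> j))"

definition Dset :: "nat \<Rightarrow> (nat \<Rightarrow> real) \<Rightarrow> real set" where
  "Dset n a = bpt a ` {1..n-1}"

text \<open>The interval exchange T on [0,1), intervals J_i = [b_{i-1}, b_i).
  Outside [0,1) it is set to the identity (irrelevant).\<close>
definition iet :: "nat \<Rightarrow> (nat \<Rightarrow> real) \<Rightarrow> (nat \<Rightarrow> nat) \<Rightarrow> real \<Rightarrow> real" where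
  "iet n a \<tau> x =
    (if 0 \<le> x \<and> x < 1 then
       (let i = (THE i. i \<in> {1..n} \<and> bpt a (i-1) \<le> x \<and> x < bpt a i)
        in x - bpt a (i-1) + btau a \<tau> (\<tau> i - 1))
     else x)"

definition iet_dual :: "nat \<Rightarrow> (nat \<Rightarrow> real) \<Rightarrow> (nat \<Rightarrow> nat) \<Rightarrow> real \<Rightarrow> real" where
  "iet_dual n a \<tau> x =
    (if 0 < x \<and> x \<le> 1 then
       (let i = (THE i. i \<in> {1..n} \<and> bpt a (i-1) < x \<and> x \<le> bpt a i)
        in x - bpt a (i-1) + btau a \<tau> (\<tau> i - 1))
     else x)"

end

theory Submission
  imports Defs
begin

text \<open>T and its dual coincide on (0,1) outside D; they differ only at the points b i, where
  T jumps to the left and the dual to the right endpoint of an image interval. Both maps send D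
  into the image endpoints c j, and every inner endpoint c j (0 < j < n) lies on the forward
  orbit of D under either map (perhaps passing through 0, resp. 1, on the way). So an orbit of
  one map leaving D and returning to it can be retraced by the other: its first point lies on
  the other map's orbit of D, and from there both maps agree until D is reached again.\<close>

definition forward_orbit :: "('a \<Rightarrow> 'a) \<Rightarrow> 'a set \<Rightarrow> 'a set" where
  "forward_orbit f D = (\<Union>k\<in>{1::nat..}. (f ^^ k) ` D)"

lemma forward_orbit_iff: "y \<in> forward_orbit f D \<longleftrightarrow> (\<exists>k\<ge>1. \<exists>q\<in>D. y = (f ^^ k) q)"
  by (auto simp: forward_orbit_def)

lemma disjoint_forward_orbit_iff:
  "(\<forall>k::nat. k \<ge> 1 \<longrightarrow> D \<inter> (f ^^ k) ` D = {}) \<longleftrightarrow> D \<inter> forward_orbit f D = {}"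
  by (auto simp: forward_orbit_def)

lemma image_in_forward_orbit: "q \<in> D \<Longrightarrow> f q \<in> forward_orbit f D"
  by (auto simp: forward_orbit_iff intro!: exI[of _ 1])

lemma forward_orbit_step:
  assumes "y \<in> forward_orbit f D"
  shows "f y \<in> forward_orbit f D"
proof -
  from assms obtain k q where "k \<ge> 1" "q \<in> D" "y = (f ^^ k) q"
    by (auto simp: forward_orbit_iff)
  then show ?thesis by (auto simp: forward_orbit_iff intro!: exI[of _ "Suc k"])
qed

lemma forward_orbit_subset:
  assumes "D \<subseteq> A" "f ` A \<subseteq> A"
  shows "forward_orbit f D \<subseteq> A"
proof -
  have "(f ^^ k) q \<in> A" if "q \<in> A" for k q
    using that assms(2) by (induction k) auto
  then show ?thesis using assms(1) by (auto simp: forward_orbit_def)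
qed

lemma forward_orbit_meets_transfer:
  assumes D: "D \<subseteq> A \<inter> B" and f: "f ` A \<subseteq> A" and g: "g ` B \<subseteq> B"
    and agree: "\<forall>x\<in>A \<inter> B - D. f x = g x"
    and start: "\<forall>z\<in>D. g z \<in> forward_orbit f D \<or> (g z \<notin> A \<and> g (g z) \<in> forward_orbit f D)"
    and meets: "D \<inter> forward_orbit g D \<noteq> {}"
  shows "D \<inter> forward_orbit f D \<noteq> {}"
proof -
  have follow: "D \<inter> forward_orbit f D \<noteq> {}"
    if "y \<in> forward_orbit f D" "y \<in> B" "(g ^^ m) y \<in> D" for y m
    using that
  proof (induction m arbitrary: y)
    case (Suc m)
    show ?case
    proof (cases "y \<in> D")
      case False
      have "y \<in> A" using Suc.prems(1) forward_orbit_subset[of D A f] D f by blast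
      with False Suc.prems(2) agree have "g y = f y" by auto
      then have "g y \<in> forward_orbit f D" using Suc.prems(1) by (simp add: forward_orbit_step)
      moreover have "g y \<in> B" using Suc.prems(2) g by blast
      ultimately show ?thesis using Suc.IH Suc.prems(3)
        by (simp add: funpow_Suc_right del: funpow.simps)
    qed (use Suc.prems(1) in blast)
  qed auto
  from meets obtain d k where d: "d \<in> D" and k: "k \<ge> 1" and dk: "(g ^^ k) d \<in> D"
    by (auto simp: forward_orbit_iff)
  then obtain k' where k': "k = Suc k'" by (cases k) auto
  have gd: "g d \<in> B" using d D g by blast
  have gk: "(g ^^ k') (g d) \<in> D" using dk k' by (simp add: funpow_Suc_right del: funpow.simps)
  from start d consider "g d \<in> forward_orbit f D" | "g d \<notin> A" "g (g d) \<in> forward_orbit f D"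
    by blast
  then show ?thesis
  proof cases
    case 1
    then show ?thesis using follow gd gk by blast
  next
    case 2
    then obtain k'' where "k' = Suc k''"
      using gk D 2 by (cases k') auto
    then have "(g ^^ k'') (g (g d)) \<in> D" using gk by (simp add: funpow_Suc_right del: funpow.simps)
    moreover have "g (g d) \<in> B" using gd g by blast
    ultimately show ?thesis using follow 2 by blast
  qed
qed

lemma strict_mono_on_partial_sums:
  fixes f :: "nat \<Rightarrow> 'a::ordered_ab_semigroup_monoid_add_imp_le"
  assumes "\<forall>i\<in>{1..n}. 0 < f i"
  shows "strict_mono_on {0..n} (\<lambda>i. \<Sum>j=1..i. f j)"
proof (rule strict_mono_onI)
  fix r s :: nat assume "r \<in> {0..n}" "s \<in> {0..n}" "r < s"
  then show "(\<Sum>j=1..r. f j) < (\<Sum>j=1..s. f j)"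
  proof (induction s)
    case (Suc s)
    have step: "(\<Sum>j=1..s. f j) < (\<Sum>j=1..Suc s. f j)"
      using assms Suc.prems(2) by simp
    show ?case
    proof (cases "r = s")
      case False
      then have "(\<Sum>j=1..r. f j) < (\<Sum>j=1..s. f j)" using Suc by simp
      then show ?thesis using step by (rule order.strict_trans)
    qed (use step in simp)
  qed simp
qed

locale interval_exchange =
  fixes n :: nat and a :: "nat \<Rightarrow> real" and \<tau> :: "nat \<Rightarrow> nat"
  assumes n_ge_2: "n \<ge> 2"
    and a_pos: "\<forall>i\<in>{1..n}. a i > 0"
    and a_sum: "(\<Sum>i=1..n. a i) = 1"
    and \<tau>_permutes: "\<tau> permutes {1..n}"
begin

abbreviation "b \<equiv> bpt a"
abbreviation "c \<equiv> btau a \<tau>"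
abbreviation "D \<equiv> Dset n a"
abbreviation "T \<equiv> iet n a \<tau>"
abbreviation "S \<equiv> iet_dual n a \<tau>"

lemma \<tau>_in: "i \<in> {1..n} \<Longrightarrow> \<tau> i \<in> {1..n}"
  using permutes_in_image[OF \<tau>_permutes] by blast

lemma inv_\<tau>_in: "j \<in> {1..n} \<Longrightarrow> inv \<tau> j \<in> {1..n}"
  using permutes_in_image[OF permutes_inv[OF \<tau>_permutes]] by blast

lemma \<tau>_inv_\<tau> [simp]: "\<tau> (inv \<tau> j) = j" and inv_\<tau>_\<tau> [simp]: "inv \<tau> (\<tau> i) = i"
  using permutes_inverses[OF \<tau>_permutes] by blast+

lemma b_0 [simp]: "b 0 = 0" and b_n [simp]: "b n = 1"
  using a_sum by (simp_all add: bpt_def)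

lemma c_0 [simp]: "c 0 = 0"
  by (simp add: btau_def)

lemma c_n [simp]: "c n = 1"
proof -
  have "c n = (\<Sum>i=1..n. a i)"
    unfolding btau_def
    by (rule sum.reindex_bij_betw[OF permutes_imp_bij[OF permutes_inv[OF \<tau>_permutes]]])
  then show ?thesis using a_sum by simp
qed

lemma b_step: "i \<ge> 1 \<Longrightarrow> b i = b (i - 1) + a i"
  by (cases i) (simp_all add: bpt_def)

lemma c_step:
  assumes "i \<in> {1..n}"
  shows "c (\<tau> i) = c (\<tau> i - 1) + a i"
proof -
  obtain k where k: "\<tau> i = Suc k" using assms \<tau>_in[of i] by (cases "\<tau> i") auto
  show ?thesis using inv_\<tau>_\<tau>[of i] by (simp add: k btau_def)
qed

lemma b_strict_mono: "strict_mono_on {0..n} b"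
  unfolding bpt_def[abs_def] by (rule strict_mono_on_partial_sums) (use a_pos in blast)

lemma c_strict_mono: "strict_mono_on {0..n} c"
  unfolding btau_def[abs_def]
  by (rule strict_mono_on_partial_sums) (use a_pos inv_\<tau>_in in blast)

lemma b_less_iff: "i \<le> n \<Longrightarrow> j \<le> n \<Longrightarrow> b i < b j \<longleftrightarrow> i < j"
  and b_le_iff: "i \<le> n \<Longrightarrow> j \<le> n \<Longrightarrow> b i \<le> b j \<longleftrightarrow> i \<le> j"
  using strict_mono_on_less[OF b_strict_mono] strict_mono_on_less_eq[OF b_strict_mono] by auto

lemma c_le_iff: "i \<le> n \<Longrightarrow> j \<le> n \<Longrightarrow> c i \<le> c j \<longleftrightarrow> i \<le> j"
  using strict_mono_on_less_eq[OF c_strict_mono] by auto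

lemma b_bounds: "i \<le> n \<Longrightarrow> 0 \<le> b i \<and> b i \<le> 1"
  using b_le_iff[of 0 i] b_le_iff[of i n] by simp

lemma c_bounds: "j \<le> n \<Longrightarrow> 0 \<le> c j \<and> c j \<le> 1"
  using c_le_iff[of 0 j] c_le_iff[of j n] by simp

lemma b_in_D: "i \<in> {1..n-1} \<Longrightarrow> b i \<in> D"
  by (simp add: Dset_def)

lemma D_subset: "D \<subseteq> {0..<1} \<inter> {0<..1}"
proof
  fix x assume "x \<in> D"
  then obtain i where i: "i \<in> {1..n-1}" "x = b i" by (auto simp: Dset_def)
  then have "b 0 < b i" "b i < b n" using b_less_iff[of 0 i] b_less_iff[of i n] by auto
  then show "x \<in> {0..<1} \<inter> {0<..1}" using i(2) by simp
qed

lemma interval_index_unique: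
  "i \<in> {1..n} \<Longrightarrow> j \<in> {1..n} \<Longrightarrow> b (i - 1) < b j \<Longrightarrow> b (j - 1) < b i \<Longrightarrow> i = j"
proof -
  assume "i \<in> {1..n}" "j \<in> {1..n}" "b (i - 1) < b j" "b (j - 1) < b i"
  then have "i - 1 < j" "j - 1 < i" using b_less_iff[of "i - 1" j] b_less_iff[of "j - 1" i] by auto
  then show "i = j" using \<open>i \<in> {1..n}\<close> \<open>j \<in> {1..n}\<close> by auto
qed

lemma interval_exists:
  assumes "0 \<le> x" "x < 1"
  shows "\<exists>i\<in>{1..n}. b (i - 1) \<le> x \<and> x < b i"
proof -
  define i where "i = (LEAST i. x < b i)"
  have "x < b i" "i \<le> n"
    unfolding i_def using assms by (auto intro: LeastI[of _ n] Least_le[of _ n])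
  moreover have "i \<noteq> 0" using \<open>x < b i\<close> assms by (cases "i = 0") auto
  moreover have "\<not> x < b (i - 1)"
    unfolding i_def by (rule not_less_Least) (use \<open>i \<noteq> 0\<close> i_def in auto)
  ultimately show ?thesis by (intro bexI[of _ i]) auto
qed

lemma dual_interval_exists:
  assumes "0 < x" "x \<le> 1"
  shows "\<exists>i\<in>{1..n}. b (i - 1) < x \<and> x \<le> b i"
proof -
  define i where "i = (LEAST i. x \<le> b i)"
  have "x \<le> b i" "i \<le> n"
    unfolding i_def using assms by (auto intro: LeastI[of _ n] Least_le[of _ n])
  moreover have "i \<noteq> 0" using \<open>x \<le> b i\<close> assms by (cases "i = 0") auto
  moreover have "\<not> x \<le> b (i - 1)"
    unfolding i_def by (rule not_less_Least) (use \<open>i \<noteq> 0\<close> i_def in auto)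
  ultimately show ?thesis by (intro bexI[of _ i]) auto
qed

lemma iet_eq:
  assumes i: "i \<in> {1..n}" and x: "b (i - 1) \<le> x" "x < b i"
  shows "T x = x - b (i - 1) + c (\<tau> i - 1)"
proof -
  have "i - 1 \<le> n" "i \<le> n" using i by auto
  then have "0 \<le> x" "x < 1" using x b_bounds by (meson order_trans order_less_le_trans)+
  moreover have "(THE i. i \<in> {1..n} \<and> b (i - 1) \<le> x \<and> x < b i) = i"
    using i x by (rule_tac the_equality) (auto intro: interval_index_unique)
  ultimately show ?thesis by (simp add: iet_def)
qed

lemma iet_dual_eq:
  assumes i: "i \<in> {1..n}" and x: "b (i - 1) < x" "x \<le> b i"
  shows "S x = x - b (i - 1) + c (\<tau> i - 1)"
proof -
  have "i - 1 \<le> n" "i \<le> n" using i by auto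
  then have "0 < x" "x \<le> 1" using x b_bounds by (meson order_trans order_le_less_trans)+
  moreover have "(THE i. i \<in> {1..n} \<and> b (i - 1) < x \<and> x \<le> b i) = i"
    using i x by (rule_tac the_equality) (auto intro: interval_index_unique)
  ultimately show ?thesis by (simp add: iet_dual_def)
qed

lemma iet_maps_into: "T ` {0..<1} \<subseteq> {0..<1}"
proof clarify
  fix x :: real assume "x \<in> {0..<1}"
  then obtain i where i: "i \<in> {1..n}" "b (i - 1) \<le> x" "x < b i"
    using interval_exists[of x] by auto
  have "\<tau> i - 1 \<le> n" "\<tau> i \<le> n" using i(1) \<tau>_in[of i] by auto
  then have "0 \<le> c (\<tau> i - 1)" "c (\<tau> i) \<le> 1" using c_bounds by blast+
  then show "T x \<in> {0..<1}"
    using iet_eq[OF i] c_step[OF i(1)] b_step[of i] i by auto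
qed

lemma iet_dual_maps_into: "S ` {0<..1} \<subseteq> {0<..1}"
proof clarify
  fix x :: real assume "x \<in> {0<..1}"
  then obtain i where i: "i \<in> {1..n}" "b (i - 1) < x" "x \<le> b i"
    using dual_interval_exists[of x] by auto
  have "\<tau> i - 1 \<le> n" "\<tau> i \<le> n" using i(1) \<tau>_in[of i] by auto
  then have "0 \<le> c (\<tau> i - 1)" "c (\<tau> i) \<le> 1" using c_bounds by blast+
  then show "S x \<in> {0<..1}"
    using iet_dual_eq[OF i] c_step[OF i(1)] b_step[of i] i by auto
qed

lemma iet_left_endpoint: "i \<in> {1..n} \<Longrightarrow> T (b (i - 1)) = c (\<tau> i - 1)"
  using iet_eq[of i "b (i - 1)"] b_less_iff[of "i - 1" i] by auto

lemma iet_dual_right_endpoint: "i \<in> {1..n} \<Longrightarrow> S (b i) = c (\<tau> i)"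
  using iet_dual_eq[of i "b i"] b_less_iff[of "i - 1" i] c_step[of i] b_step[of i] by auto

lemma iet_eq_iet_dual: "x \<in> {0..<1} \<inter> {0<..1} - D \<Longrightarrow> T x = S x"
proof -
  assume x: "x \<in> {0..<1} \<inter> {0<..1} - D"
  then obtain i where i: "i \<in> {1..n}" "b (i - 1) \<le> x" "x < b i"
    using interval_exists[of x] by auto
  have "x \<noteq> b (i - 1)"
  proof (cases "i = 1")
    case False
    then have "b (i - 1) \<in> D" using i(1) by (intro b_in_D) auto
    then show ?thesis using x by auto
  qed (use x in auto)
  then show ?thesis using iet_eq[OF i] iet_dual_eq[of i x] i by auto
qed

text \<open>The second case is the first interval being moved to position j + 1: then
  c j = T 0, and 0 is itself reached from D as the image of the interval moved to the front.\<close>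
lemma c_in_forward_orbit_iet:
  assumes j: "j \<in> {1..n-1}"
  shows "c j \<in> forward_orbit T D"
proof -
  define l where "l = inv \<tau> (Suc j)"
  have "Suc j \<in> {1..n}" using j by auto
  then have l: "l \<in> {1..n}" "\<tau> l = Suc j" unfolding l_def using inv_\<tau>_in by auto
  have Tl: "T (b (l - 1)) = c j" using iet_left_endpoint[OF l(1)] l(2) by simp
  show ?thesis
  proof (cases "l = 1")
    case False
    then have "b (l - 1) \<in> D" using l(1) by (intro b_in_D) auto
    then show ?thesis unfolding Tl[symmetric] by (rule image_in_forward_orbit)
  next
    case True
    define m where "m = inv \<tau> 1"
    have "1 \<in> {1..n}" using n_ge_2 by auto
    then have m: "m \<in> {1..n}" "\<tau> m = 1" unfolding m_def using inv_\<tau>_in by auto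
    have "m \<noteq> 1" using m(2) l(2) True j by auto
    then have "b (m - 1) \<in> D" using m(1) by (intro b_in_D) auto
    then have "T (b (m - 1)) \<in> forward_orbit T D" by (rule image_in_forward_orbit)
    moreover have "T (b (m - 1)) = b 0" using iet_left_endpoint[OF m(1)] m(2) by simp
    ultimately have "T (b 0) \<in> forward_orbit T D" using forward_orbit_step by metis
    then show ?thesis using Tl True by simp
  qed
qed

lemma c_in_forward_orbit_iet_dual:
  assumes j: "j \<in> {1..n-1}"
  shows "c j \<in> forward_orbit S D"
proof -
  define l where "l = inv \<tau> j"
  have "j \<in> {1..n}" using j by auto
  then have l: "l \<in> {1..n}" "\<tau> l = j" unfolding l_def using inv_\<tau>_in by auto
  have Sl: "S (b l) = c j" using iet_dual_right_endpoint[OF l(1)] l(2) by simp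
  show ?thesis
  proof (cases "l = n")
    case False
    then have "b l \<in> D" using l(1) by (intro b_in_D) auto
    then show ?thesis unfolding Sl[symmetric] by (rule image_in_forward_orbit)
  next
    case True
    define m where "m = inv \<tau> n"
    have "n \<in> {1..n}" using n_ge_2 by auto
    then have m: "m \<in> {1..n}" "\<tau> m = n" unfolding m_def using inv_\<tau>_in by auto
    have "m \<noteq> n" using m(2) l(2) True j by auto
    then have "b m \<in> D" using m(1) by (intro b_in_D) auto
    then have "S (b m) \<in> forward_orbit S D" by (rule image_in_forward_orbit)
    moreover have "S (b m) = b n" using iet_dual_right_endpoint[OF m(1)] m(2) by simp
    ultimately have "S (b n) \<in> forward_orbit S D" using forward_orbit_step by metis
    then show ?thesis using Sl True by simp
  qed
qed

lemma iet_dual_D_reaches_orbit_iet: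
  assumes z: "z \<in> D"
  shows "S z \<in> forward_orbit T D \<or> (S z \<notin> {0..<1} \<and> S (S z) \<in> forward_orbit T D)"
proof -
  obtain i where i: "i \<in> {1..n-1}" "z = b i" using z by (auto simp: Dset_def)
  then have i': "i \<in> {1..n}" "\<tau> i \<in> {1..n}" using \<tau>_in[of i] by auto
  have Sz: "S z = c (\<tau> i)" using iet_dual_right_endpoint[OF i'(1)] i(2) by simp
  show ?thesis
  proof (cases "\<tau> i = n")
    case False
    then have "\<tau> i \<in> {1..n-1}" using i'(2) by auto
    then show ?thesis using Sz c_in_forward_orbit_iet by simp
  next
    case True
    have n: "n \<in> {1..n}" using n_ge_2 by auto
    have "\<tau> n \<noteq> n"
    proof
      assume "\<tau> n = n"
      then have "inv \<tau> (\<tau> n) = inv \<tau> (\<tau> i)" using True by simp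
      then show False using i(1) by auto
    qed
    then have "\<tau> n \<in> {1..n-1}" using \<tau>_in[of n] n by auto
    moreover have "S (S z) = c (\<tau> n)" using Sz True iet_dual_right_endpoint[OF n] by simp
    moreover have "S z = 1" using Sz True by simp
    ultimately show ?thesis using c_in_forward_orbit_iet by simp
  qed
qed

lemma iet_D_reaches_orbit_iet_dual:
  assumes z: "z \<in> D"
  shows "T z \<in> forward_orbit S D \<or> (T z \<notin> {0<..1} \<and> T (T z) \<in> forward_orbit S D)"
proof -
  obtain i where i: "i \<in> {1..n-1}" "z = b i" using z by (auto simp: Dset_def)
  then have i': "Suc i \<in> {1..n}" "\<tau> (Suc i) \<in> {1..n}" using \<tau>_in[of "Suc i"] by auto
  have Tz: "T z = c (\<tau> (Suc i) - 1)" using iet_left_endpoint[OF i'(1)] i(2) by simp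
  show ?thesis
  proof (cases "\<tau> (Suc i) = 1")
    case False
    then have "\<tau> (Suc i) - 1 \<in> {1..n-1}" using i'(2) by auto
    then show ?thesis using Tz c_in_forward_orbit_iet_dual by simp
  next
    case True
    have one: "1 \<in> {1..n}" using n_ge_2 by auto
    have "\<tau> 1 \<noteq> 1"
    proof
      assume "\<tau> 1 = 1"
      then have "inv \<tau> (\<tau> 1) = inv \<tau> (\<tau> (Suc i))" using True by simp
      then show False using i(1) by auto
    qed
    then have "\<tau> 1 - 1 \<in> {1..n-1}" using \<tau>_in[of 1] one by auto
    moreover have "T (T z) = c (\<tau> 1 - 1)" using Tz True iet_left_endpoint[OF one] by simp
    moreover have "T z = 0" using Tz True by simp
    ultimately show ?thesis using c_in_forward_orbit_iet_dual by simp
  qed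
qed

end

theorem lemma3p3:
  fixes n :: nat and a :: "nat \<Rightarrow> real" and \<tau> :: "nat \<Rightarrow> nat"
  assumes "n \<ge> 2"
    and "\<forall>i\<in>{1..n}. a i > 0"
    and "(\<Sum>i=1..n. a i) = 1"
    and "\<tau> permutes {1..n}"
  shows "(\<forall>k::nat. k \<ge> 1 \<longrightarrow> Dset n a \<inter> ((iet n a \<tau>) ^^ k) ` Dset n a = {})
     \<longleftrightarrow> (\<forall>k::nat. k \<ge> 1 \<longrightarrow> Dset n a \<inter> ((iet_dual n a \<tau>) ^^ k) ` Dset n a = {})"
proof -
  interpret interval_exchange n a \<tau> using assms by unfold_locales
  have D: "D \<subseteq> {0..<1} \<inter> {0<..1}" "D \<subseteq> {0<..1} \<inter> {0..<1}"
    using D_subset by (simp_all add: Int_commute)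
  have agree: "\<forall>x\<in>{0..<1} \<inter> {0<..1} - D. T x = S x" "\<forall>x\<in>{0<..1} \<inter> {0..<1} - D. S x = T x"
    using iet_eq_iet_dual by (simp_all add: Int_commute)
  have "D \<inter> forward_orbit T D \<noteq> {} \<longleftrightarrow> D \<inter> forward_orbit S D \<noteq> {}"
  proof
    assume "D \<inter> forward_orbit T D \<noteq> {}"
    then show "D \<inter> forward_orbit S D \<noteq> {}"
      using iet_D_reaches_orbit_iet_dual
      by (intro forward_orbit_meets_transfer[OF D(2) iet_dual_maps_into iet_maps_into agree(2)]) auto
  next
    assume "D \<inter> forward_orbit S D \<noteq> {}"
    then show "D \<inter> forward_orbit T D \<noteq> {}"
      using iet_dual_D_reaches_orbit_iet
      by (intro forward_orbit_meets_transfer[OF D(1) iet_maps_into iet_dual_maps_into agree(1)]) auto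
  qed
  then show ?thesis unfolding disjoint_forward_orbit_iff by blast
qed

end
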